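(* Let $k\ge1$, $A\subseteq\mathbb{R}$ open, $x\in A$ and $f\in C^k(A,\mathbb{R})$. Then for all $h\in D_k$, $${}^\bullet f(x+h)=\sum_{i=0}^k\frac{h^i}{i!}\,f^{(i)}(x)\quad\text{in }{}^\bullet\mathbb{R},$$ and the real coefficients $f^{(i)}(x)$, $i=0,\dots,k$, are uniquely determined by this formula (i.e. if $c_0,\dots,c_k\in\mathbb{R}$ satisfy ${}^\bullet f(x+h)=\sum_{i=0}^k\frac{h^i}{i!}c_i$ for all $h\in D_k$, then $c_i=f^{(i)}(x)$).
   Context: A function $x:\mathbb{R}\to\mathbb{R}$ is nilpotent if $|x(t)-x(0)|^m=o(t)$ as $t\to0$ for some $m\in\mathbb{N}$; for $A\subseteq\mathbb{R}$, $\mathrm{Nil}(A)$ is the set of nilpotent functions with values in $A$; $x\sim y$ iff $x(t)=y(t)+o(t)$ as $t\to0$. ${}^\bullet A:=\mathrm{Nil}(A)/\sim\subseteq{}^\bullet\mathbb{R}:=\mathrm{Nil}(\mathbb{R})/\sim$ (a commutative ring under pointwise operations, reals identified with constant functions). For locally Lipschitz $g:A\to\mathbb{R}$, ${}^\bullet g([y]):=[g\circ y]$. $D:=\{h\in{}^\bullet\mathbb{R}:\limsup_{t\to0}|h(t)/t|<+\infty\}$ and $D_k:=\{h\in{}^\bullet\mathbb{R}: h^k\in D\}$; elements of $D_k$ have standard part $0$, so $x+h\in{}^\bullet A$. *)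

theory Defs
  imports "HOL-Analysis.Analysis" "HOL-Library.Landau_Symbols"
begin

text \<open>Fermat reals, worked with at the level of representatives.
  A representative is a function real => real; the class [x] in the quotient
  is handled through the relation fermat_eq.\<close>

definition nilpotent :: "(real \<Rightarrow> real) \<Rightarrow> bool" where
  "nilpotent x \<longleftrightarrow> (\<exists>m::nat. (\<lambda>t. \<bar>x t - x 0\<bar> ^ m) \<in> o[at 0](\<lambda>t. t))"

definition Nil :: "real set \<Rightarrow> (real \<Rightarrow> real) set" where
  "Nil A = {x. nilpotent x \<and> (\<forall>t. x t \<in> A)}"

definition fermat_eq :: "(real \<Rightarrow> real) \<Rightarrow> (real \<Rightarrow> real) \<Rightarrow> bool" where
  "fermat_eq x y \<longleftrightarrow> (\<lambda>t. x t - y t) \<in> o[at 0](\<lambda>t. t)"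

definition in_D :: "(real \<Rightarrow> real) \<Rightarrow> bool" where
  "in_D h \<longleftrightarrow> nilpotent h \<and> Limsup (at 0) (\<lambda>t. ereal \<bar>h t / t\<bar>) < \<infinity>"

definition in_Dk :: "nat \<Rightarrow> (real \<Rightarrow> real) \<Rightarrow> bool" where
  "in_Dk k h \<longleftrightarrow> nilpotent h \<and> in_D (\<lambda>t. h t ^ k)"

definition Ck_on :: "nat \<Rightarrow> real set \<Rightarrow> (real \<Rightarrow> real) \<Rightarrow> bool" where
  "Ck_on k A f \<longleftrightarrow> (\<forall>i<k. \<forall>y\<in>A. ((deriv ^^ i) f) differentiable (at y))
                   \<and> continuous_on A ((deriv ^^ k) f)"

end

theory Submission
  imports Defs
begin

text \<open>Taylor's formula with Peano remainder,
  \<open>f z = (\<Sum>i\<le>k. f\<^bsup>(i)\<^esup> x / i! * (z - x)\<^bsup>i\<^esup>) + o(\<bar>z - x\<bar>\<^bsup>k\<^esup>)\<close>, is evaluated along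
  \<open>y(t) = x + h(t) + o(t)\<close>. Since \<open>h\<^bsup>k\<^esup> = O(t)\<close>, also \<open>(y - x)\<^bsup>k\<^esup> = O(t)\<close>, so the remainder
  is \<open>o(t)\<close>; and replacing \<open>(y - x)\<^bsup>i\<^esup>\<close> by \<open>h\<^bsup>i\<^esup>\<close> costs only \<open>o(t)\<close>, because \<open>y - x\<close>
  and \<open>h\<close> are bounded near \<open>0\<close>.
  For uniqueness, test with \<open>h(t) = \<epsilon> \<bar>t\<bar>\<^bsup>1/k\<^esup>\<close>, truncated so that \<open>x + h\<close> stays in \<open>A\<close>:
  two expansions then differ by a polynomial \<open>p\<close> of degree \<open>\<le> k\<close> with \<open>p(s) = o(s\<^bsup>k\<^esup>)\<close>
  as \<open>s \<rightarrow> 0\<^sup>+\<close>, and such a polynomial is zero.\<close>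

lemma bigo_tendsto_0:
  fixes f g :: "'a \<Rightarrow> real"
  assumes "f \<in> O[F](g)" "(g \<longlongrightarrow> 0) F"
  shows "(f \<longlongrightarrow> 0) F"
proof -
  obtain c where "eventually (\<lambda>x. norm (f x) \<le> c * norm (g x)) F"
    using assms(1) by (elim landau_o.bigE)
  moreover have "((\<lambda>x. c * norm (g x)) \<longlongrightarrow> 0) F"
    using tendsto_mult_right_zero[OF tendsto_norm_zero[OF assms(2)]] .
  ultimately show ?thesis by (rule Lim_null_comparison)
qed

lemma fermat_eq_refl: "fermat_eq x x"
  by (simp add: fermat_eq_def)

lemma fermat_eq_sym: "fermat_eq x y \<Longrightarrow> fermat_eq y x"
  unfolding fermat_eq_def by (drule landau_o.small.uminus_in_iff[THEN iffD2]) simp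

lemma fermat_eq_trans [trans]: "fermat_eq x y \<Longrightarrow> fermat_eq y z \<Longrightarrow> fermat_eq x z"
  unfolding fermat_eq_def by (drule (1) sum_in_smallo(1)) simp

lemma fermat_eq_sum:
  assumes "\<And>i. i \<in> I \<Longrightarrow> fermat_eq (x i) (y i)"
  shows "fermat_eq (\<lambda>t. \<Sum>i\<in>I. x i t) (\<lambda>t. \<Sum>i\<in>I. y i t)"
  using big_sum_in_smallo[of I "\<lambda>i t. x i t - y i t"] assms
  by (simp add: fermat_eq_def sum_subtractf)

lemma fermat_eq_cmult: "fermat_eq x y \<Longrightarrow> fermat_eq (\<lambda>t. c * x t) (\<lambda>t. c * y t)"
  by (simp add: fermat_eq_def right_diff_distrib[symmetric])

lemma fermat_eq_power:
  assumes "fermat_eq x y" "x \<in> O[at 0](\<lambda>_. 1)" "y \<in> O[at 0](\<lambda>_. 1)"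
  shows "fermat_eq (\<lambda>t. x t ^ n) (\<lambda>t. y t ^ n)"
proof -
  have "(\<lambda>t. x t ^ i) \<in> O[at 0](\<lambda>_. 1)" "(\<lambda>t. y t ^ i) \<in> O[at 0](\<lambda>_. 1)" for i
    using landau_o.big_power[OF assms(2), of i] landau_o.big_power[OF assms(3), of i] by simp_all
  then have "(\<lambda>t. \<Sum>i<n. y t ^ (n - Suc i) * x t ^ i) \<in> O[at 0](\<lambda>_. 1)"
    by (intro big_sum_in_bigo landau_o.big.mult_in_1)
  with assms(1) have "(\<lambda>t. (x t - y t) * (\<Sum>i<n. y t ^ (n - Suc i) * x t ^ i)) \<in> o[at 0](\<lambda>t. t)"
    unfolding fermat_eq_def by (rule landau_o.small_1_mult)
  then show ?thesis
    unfolding fermat_eq_def power_diff_sumr2 .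
qed

lemma nilpotent_add_const: "nilpotent (\<lambda>t. c + x t) \<longleftrightarrow> nilpotent x"
  by (simp add: nilpotent_def)

lemma nilpotentI_bigo_square:
  assumes "(\<lambda>t. \<bar>x t - x 0\<bar> ^ m) \<in> O[at 0](\<lambda>t. t ^ 2)"
  shows "nilpotent x"
proof -
  have "(\<lambda>t::real. t) \<in> o[at 0](\<lambda>_. 1)"
    by (rule smalloI_tendsto) auto
  then have "(\<lambda>t::real. t * t) \<in> o[at 0](\<lambda>t. 1 * t)"
    by (rule landau_o.small_big_mult[OF _ landau_o.big_refl])
  then have "(\<lambda>t::real. t ^ 2) \<in> o[at 0](\<lambda>t. t)"
    by (simp add: power2_eq_square)
  then show ?thesis
    unfolding nilpotent_def using assms landau_o.big_small_trans by blast
qed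

lemma in_D_iff_bigo: "in_D h \<longleftrightarrow> nilpotent h \<and> h \<in> O[at 0](\<lambda>t. t)"
proof -
  have nz: "eventually (\<lambda>t::real. t \<noteq> 0) (at 0)"
    by (simp add: eventually_at_filter)
  have "Limsup (at 0) (\<lambda>t. ereal \<bar>h t / t\<bar>) < \<infinity> \<longleftrightarrow> h \<in> O[at 0](\<lambda>t. t)"
  proof
    assume "Limsup (at 0) (\<lambda>t. ereal \<bar>h t / t\<bar>) < \<infinity>"
    then obtain n :: nat where "Limsup (at 0) (\<lambda>t. ereal \<bar>h t / t\<bar>) < ereal (real n)"
      using less_PInf_Ex_of_nat by auto
    then have "eventually (\<lambda>t. ereal \<bar>h t / t\<bar> < ereal (real n)) (at 0)"
      by (rule Limsup_lessD)
    with nz have "eventually (\<lambda>t. norm (h t) \<le> real n * norm t) (at 0)"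
      by eventually_elim (simp add: abs_divide divide_less_eq)
    then show "h \<in> O[at 0](\<lambda>t. t)"
      by (rule bigoI)
  next
    assume "h \<in> O[at 0](\<lambda>t. t)"
    then obtain c where "eventually (\<lambda>t. norm (h t) \<le> c * norm t) (at 0)"
      by (elim landau_o.bigE)
    with nz have "eventually (\<lambda>t. ereal \<bar>h t / t\<bar> \<le> ereal c) (at 0)"
      by eventually_elim (simp add: abs_divide divide_le_eq)
    then have "Limsup (at 0) (\<lambda>t. ereal \<bar>h t / t\<bar>) \<le> ereal c"
      by (rule Limsup_bounded)
    then show "Limsup (at 0) (\<lambda>t. ereal \<bar>h t / t\<bar>) < \<infinity>"
      using order_le_less_trans by fastforce
  qed
  then show ?thesis
    unfolding in_D_def by blast
qed

lemma in_Dk_iff: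
  "in_Dk k h \<longleftrightarrow> nilpotent h \<and> nilpotent (\<lambda>t. h t ^ k) \<and> (\<lambda>t. h t ^ k) \<in> O[at 0](\<lambda>t. t)"
  by (auto simp: in_Dk_def in_D_iff_bigo)

lemma in_Dk_tendsto_0:
  assumes "k \<ge> 1" "in_Dk k h"
  shows "(h \<longlongrightarrow> 0) (at 0)"
proof -
  have "(\<lambda>t. h t ^ k) \<in> O[at 0](\<lambda>t. t)"
    using assms(2) by (simp add: in_Dk_iff)
  then have "((\<lambda>t. h t ^ k) \<longlongrightarrow> 0) (at 0)"
    using tendsto_ident_at by (rule bigo_tendsto_0)
  then have "((\<lambda>t. root k \<bar>h t ^ k\<bar>) \<longlongrightarrow> root k \<bar>0\<bar>) (at 0)"
    by (intro tendsto_intros)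
  moreover have "root k \<bar>h t ^ k\<bar> = \<bar>h t\<bar>" for t
    using assms(1) real_root_power_cancel[of k "\<bar>h t\<bar>"] by (simp add: power_abs)
  ultimately show ?thesis
    by (simp add: tendsto_rabs_zero_iff)
qed

lemma Ck_on_has_real_derivative:
  assumes "Ck_on k A f" "m < k" "y \<in> A"
  shows "((deriv ^^ m) f has_real_derivative (deriv ^^ Suc m) f y) (at y)"
  using assms unfolding Ck_on_def by (simp add: DERIV_deriv_iff_real_differentiable)

lemma Ck_on_taylor_lagrange:
  assumes "k \<ge> 1" "Ck_on k A f" "cball x r \<subseteq> A" "\<bar>z - x\<bar> \<le> r"
  obtains \<xi> where "\<bar>\<xi> - x\<bar> \<le> \<bar>z - x\<bar>"
    "f z = (\<Sum>i<k. (deriv ^^ i) f x / fact i * (z - x) ^ i) + (deriv ^^ k) f \<xi> / fact k * (z - x) ^ k"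
proof (cases "z = x")
  case True
  have "(\<Sum>i<k. (deriv ^^ i) f x / fact i * (z - x) ^ i) = f x"
    using assms(1) True by (simp add: zero_power sum.lessThan_Suc_shift[of _ "k - 1", simplified])
  then show ?thesis
    using that[of x] True assms(1) by simp
next
  case False
  have "\<forall>m t. m < k \<and> x - r \<le> t \<and> t \<le> x + r \<longrightarrow>
      ((deriv ^^ m) f has_real_derivative (deriv ^^ Suc m) f t) (at t)"
  proof (intro allI impI)
    fix m t assume "m < k \<and> x - r \<le> t \<and> t \<le> x + r"
    moreover from this have "t \<in> A"
      using assms(3) by (auto simp: dist_real_def)
    ultimately show "((deriv ^^ m) f has_real_derivative (deriv ^^ Suc m) f t) (at t)"
      using assms(2) Ck_on_has_real_derivative by blast
  qed
  then obtain \<xi> where "if z < x then z < \<xi> \<and> \<xi> < x else x < \<xi> \<and> \<xi> < z"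
    "f z = (\<Sum>i<k. (deriv ^^ i) f x / fact i * (z - x) ^ i) + (deriv ^^ k) f \<xi> / fact k * (z - x) ^ k"
    using Taylor[of k "\<lambda>i. (deriv ^^ i) f" f "x - r" "x + r" x z] assms(1,4) False
    by (auto simp: abs_le_iff)
  then show ?thesis
    using that[of \<xi>] by (auto split: if_splits)
qed

lemma Ck_on_taylor_peano:
  assumes "k \<ge> 1" "open A" "x \<in> A" "Ck_on k A f"
  shows "(\<lambda>z. f z - (\<Sum>i\<le>k. (deriv ^^ i) f x / fact i * (z - x) ^ i))
           \<in> o[nhds x](\<lambda>z. (z - x) ^ k)"
proof (rule landau_o.smallI)
  fix c :: real
  assume "c > 0"
  obtain r where r: "r > 0" "cball x r \<subseteq> A"
    using assms(2,3) open_contains_cball by blast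
  have "isCont ((deriv ^^ k) f) x"
    using assms(2-4) continuous_on_eq_continuous_at unfolding Ck_on_def by blast
  then obtain d where d: "d > 0"
    "\<And>\<xi>. \<bar>\<xi> - x\<bar> < d \<Longrightarrow> \<bar>(deriv ^^ k) f \<xi> - (deriv ^^ k) f x\<bar> < c"
    using \<open>c > 0\<close> unfolding continuous_at_eps_delta dist_real_def by blast
  have "eventually (\<lambda>z. \<bar>z - x\<bar> < min d r) (nhds x)"
    using d(1) r(1) unfolding eventually_nhds_metric dist_real_def by (intro exI[of _ "min d r"]) auto
  then show "eventually (\<lambda>z. norm (f z - (\<Sum>i\<le>k. (deriv ^^ i) f x / fact i * (z - x) ^ i))
               \<le> c * norm ((z - x) ^ k)) (nhds x)"
  proof eventually_elim
    case (elim z)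
    then obtain \<xi> where \<xi>: "\<bar>\<xi> - x\<bar> \<le> \<bar>z - x\<bar>"
      "f z = (\<Sum>i<k. (deriv ^^ i) f x / fact i * (z - x) ^ i) + (deriv ^^ k) f \<xi> / fact k * (z - x) ^ k"
      using Ck_on_taylor_lagrange[OF assms(1,4) r(2), of z] by auto
    have "f z - (\<Sum>i\<le>k. (deriv ^^ i) f x / fact i * (z - x) ^ i)
        = ((deriv ^^ k) f \<xi> - (deriv ^^ k) f x) / fact k * (z - x) ^ k"
      using \<xi>(2) by (simp add: lessThan_Suc_atMost[symmetric] field_simps)
    also have "\<bar>\<dots>\<bar> \<le> \<bar>(deriv ^^ k) f \<xi> - (deriv ^^ k) f x\<bar> * \<bar>(z - x) ^ k\<bar>"
      by (simp add: abs_mult divide_le_eq mult_le_cancel_left1 mult_less_0_iff)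
    also have "\<dots> \<le> c * \<bar>(z - x) ^ k\<bar>"
      using d(2)[of \<xi>] \<xi>(1) elim by (intro mult_right_mono) auto
    finally show ?case by simp
  qed
qed

lemma fermat_eq_taylor:
  assumes "k \<ge> 1" "open A" "x \<in> A" "Ck_on k A f" "in_Dk k h" "fermat_eq y (\<lambda>t. x + h t)"
  shows "fermat_eq (\<lambda>t. f (y t)) (\<lambda>t. \<Sum>i\<le>k. h t ^ i / fact i * (deriv ^^ i) f x)"
proof -
  define T where "T z = (\<Sum>i\<le>k. (deriv ^^ i) f x / fact i * (z - x) ^ i)" for z
  have yh: "fermat_eq (\<lambda>t. y t - x) h"
    using assms(6) by (simp add: fermat_eq_def algebra_simps)
  have h0: "(h \<longlongrightarrow> 0) (at 0)"
    using assms(1,5) by (rule in_Dk_tendsto_0)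
  have "((\<lambda>t. y t - x - h t) \<longlongrightarrow> 0) (at 0)"
    using yh tendsto_ident_at unfolding fermat_eq_def
    by (rule bigo_tendsto_0[OF landau_o.small_imp_big])
  from tendsto_add[OF this h0] have y0: "((\<lambda>t. y t - x) \<longlongrightarrow> 0) (at 0)"
    by simp
  have powers: "fermat_eq (\<lambda>t. (y t - x) ^ i) (\<lambda>t. h t ^ i)" for i
    using yh bigoI_tendsto[of "\<lambda>t. y t - x" "\<lambda>_. 1" 0] bigoI_tendsto[of h "\<lambda>_. 1" 0] y0 h0
    by (intro fermat_eq_power) auto
  have "(\<lambda>t. ((y t - x) ^ k - h t ^ k) + h t ^ k) \<in> O[at 0](\<lambda>t. t)"
    using landau_o.small_imp_big[OF powers[of k, unfolded fermat_eq_def]] assms(5)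
    unfolding in_Dk_iff by (intro sum_in_bigo(1)) auto
  then have yk: "(\<lambda>t. (y t - x) ^ k) \<in> O[at 0](\<lambda>t. t)"
    by simp
  have "filterlim y (nhds x) (at 0)"
    using y0 by (simp add: LIM_zero_iff)
  with Ck_on_taylor_peano[OF assms(1-4)]
  have "(\<lambda>t. f (y t) - T (y t)) \<in> o[at 0](\<lambda>t. (y t - x) ^ k)"
    unfolding T_def by (rule landau_o.small.compose)
  then have "fermat_eq (\<lambda>t. f (y t)) (\<lambda>t. T (y t))"
    unfolding fermat_eq_def using yk by (rule landau_o.small_big_trans)
  also have "fermat_eq (\<lambda>t. T (y t)) (\<lambda>t. \<Sum>i\<le>k. (deriv ^^ i) f x / fact i * h t ^ i)"
    unfolding T_def by (intro fermat_eq_sum fermat_eq_cmult powers)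
  finally show ?thesis
    by (simp add: field_simps)
qed

lemma poly_coeff_eq_0_if_smallo:
  fixes a :: "nat \<Rightarrow> real"
  assumes "(\<lambda>s. \<Sum>i\<le>k. a i * s ^ i) \<in> o[at_right 0](\<lambda>s. s ^ k)" "j \<le> k"
  shows "a j = 0"
  using assms(2)
proof (induction j rule: less_induct)
  case (less j)
  have "(\<lambda>s::real. s ^ (k - j)) \<in> O[at_right 0](\<lambda>_. 1)"
    by (rule bigoI_tendsto[where c = "0 ^ (k - j)"]) (auto intro!: tendsto_eq_intros)
  then have "(\<lambda>s::real. s ^ j * s ^ (k - j)) \<in> O[at_right 0](\<lambda>s. s ^ j)"
    by (rule landau_o.big_1_mult[OF landau_o.big_refl])
  then have "(\<lambda>s::real. s ^ k) \<in> O[at_right 0](\<lambda>s. s ^ j)"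
    using less.prems by (simp add: power_add[symmetric])
  with assms(1) have "(\<lambda>s. \<Sum>i\<le>k. a i * s ^ i) \<in> o[at_right 0](\<lambda>s. s ^ j)"
    by (rule landau_o.small_big_trans)
  then have "((\<lambda>s. (\<Sum>i\<le>k. a i * s ^ i) / s ^ j) \<longlongrightarrow> 0) (at_right 0)"
    by (rule smalloD_tendsto)
  moreover have "eventually (\<lambda>s. (\<Sum>i\<le>k. a i * s ^ i) / s ^ j
                             = (\<Sum>i\<in>{j..k}. a i * s ^ (i - j))) (at_right 0)"
    using eventually_at_right_less[of 0]
  proof eventually_elim
    case (elim s)
    have "(\<Sum>i\<le>k. a i * s ^ i) = (\<Sum>i\<in>{j..k}. a i * s ^ i)"
      using less.IH by (intro sum.mono_neutral_right) auto
    also have "\<dots> = (\<Sum>i\<in>{j..k}. a i * s ^ (i - j)) * s ^ j"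
      by (simp add: sum_distrib_right power_add[symmetric] mult.assoc)
    finally show ?case
      using elim by simp
  qed
  moreover have "((\<lambda>s. \<Sum>i\<in>{j..k}. a i * s ^ (i - j))
                   \<longlongrightarrow> (\<Sum>i\<in>{j..k}. a i * 0 ^ (i - j))) (at_right 0)"
    by (intro tendsto_intros)
  moreover have "(\<Sum>i\<in>{j..k}. a i * 0 ^ (i - j)) = (\<Sum>i\<in>{j..k}. if i = j then a j else 0)"
    by (intro sum.cong) auto
  then have "(\<Sum>i\<in>{j..k}. a i * 0 ^ (i - j)) = a j"
    using less.prems by simp
  ultimately show ?case
    using tendsto_unique[OF trivial_limit_at_right_real] tendsto_cong by fastforce
qed

lemma smallo_at_right_if_smallo_root:
  assumes "k \<ge> 1" "(\<lambda>t. g (root k (min 1 \<bar>t\<bar>))) \<in> o[at 0](\<lambda>t. t)"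
  shows "g \<in> o[at_right 0](\<lambda>s. s ^ k)"
proof -
  have "(\<lambda>t. g (root k (min 1 \<bar>t\<bar>))) \<in> o[at_right 0](\<lambda>t. t)"
    using assms(2) by (rule landau_o.small.filter_mono[rotated]) (simp add: at_within_le_at)
  moreover have "filterlim (\<lambda>s::real. s ^ k) (at_right 0) (at_right 0)"
    unfolding filterlim_at
  proof
    show "eventually (\<lambda>s::real. s ^ k \<in> {0<..} \<and> s ^ k \<noteq> 0) (at_right 0)"
      using eventually_at_right_less[of 0] by eventually_elim simp
    show "((\<lambda>s::real. s ^ k) \<longlongrightarrow> 0) (at_right 0)"
      using assms(1) by (auto intro!: tendsto_eq_intros)
  qed
  ultimately have "(\<lambda>s. g (root k (min 1 \<bar>s ^ k\<bar>))) \<in> o[at_right 0](\<lambda>s. s ^ k)"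
    by (rule landau_o.small.compose)
  moreover have "eventually (\<lambda>s. s = root k (min 1 \<bar>s ^ k\<bar>)) (at_right 0)"
    using eventually_at_right_less[of 0]
      order_tendstoD(2)[OF tendsto_ident_at[where s = "{0<..}"] zero_less_one]
  proof eventually_elim
    case (elim s)
    then have "min 1 \<bar>s ^ k\<bar> = s ^ k"
      using assms(1) by (simp add: power_le_one)
    then show ?case
      using assms(1) elim by (simp add: real_root_power_cancel)
  qed
  ultimately show ?thesis
    using landau_o.small.ev_eq_trans2[where f = "\<lambda>s. s" and g = "\<lambda>_ y. g y"] by simp
qed

lemma in_Dk_root_min:
  assumes "k \<ge> 1"
  shows "in_Dk k (\<lambda>t. c * root k (min 1 \<bar>t\<bar>))"
proof -
  define h where "h t = c * root k (min 1 \<bar>t\<bar>)" for t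
  have hk: "h t ^ k = c ^ k * min 1 \<bar>t\<bar>" for t
    using assms by (simp add: h_def power_mult_distrib)
  have h0: "h 0 = 0"
    by (simp add: h_def)
  have sq: "(\<lambda>t. (c ^ k * min 1 \<bar>t\<bar>) ^ 2) \<in> O[at 0](\<lambda>t. t ^ 2)"
  proof (rule bigoI, intro always_eventually allI)
    fix t :: real
    have "(min 1 \<bar>t\<bar>) ^ 2 \<le> \<bar>t\<bar> ^ 2"
      by (rule power_mono) auto
    moreover have "0 \<le> c ^ (2 * k)"
      by (simp add: power_mult)
    ultimately show "norm ((c ^ k * min 1 \<bar>t\<bar>) ^ 2) \<le> c ^ (2 * k) * norm (t ^ 2)"
      by (simp add: power_mult_distrib power_mult[symmetric] mult.commute[of k] mult_left_mono)
  qed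
  have "\<bar>h t - h 0\<bar> ^ (2 * k) = (c ^ k * min 1 \<bar>t\<bar>) ^ 2" for t
  proof -
    have "\<bar>h t - h 0\<bar> ^ (2 * k) = \<bar>h t ^ k\<bar> ^ 2"
      by (simp add: h0 power_abs power_mult[symmetric] mult.commute)
    then show ?thesis
      by (simp add: hk)
  qed
  with sq have "nilpotent h"
    by (intro nilpotentI_bigo_square[where m = "2 * k"]) simp
  moreover have "nilpotent (\<lambda>t. h t ^ k)"
    by (rule nilpotentI_bigo_square[where m = 2])
       (use sq assms in \<open>simp add: h0 hk power_0_left\<close>)
  moreover have "(\<lambda>t. h t ^ k) \<in> O[at 0](\<lambda>t. t)"
  proof (rule bigoI)
    show "eventually (\<lambda>t. norm (h t ^ k) \<le> \<bar>c\<bar> ^ k * norm t) (at 0)"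
      by (intro always_eventually allI) (simp add: hk abs_mult power_abs mult_left_mono)
  qed
  ultimately show ?thesis
    unfolding in_Dk_iff h_def by blast
qed

lemma fermat_taylor_coeffs_unique:
  assumes "k \<ge> 1" "open A" "x \<in> A"
    and c: "\<forall>h. in_Dk k h \<longrightarrow> (\<forall>y\<in>Nil A. fermat_eq y (\<lambda>t. x + h t) \<longrightarrow>
              fermat_eq (\<lambda>t. f (y t)) (\<lambda>t. \<Sum>i\<le>k. h t ^ i / fact i * c i))"
    and d: "\<forall>h. in_Dk k h \<longrightarrow> (\<forall>y\<in>Nil A. fermat_eq y (\<lambda>t. x + h t) \<longrightarrow>
              fermat_eq (\<lambda>t. f (y t)) (\<lambda>t. \<Sum>i\<le>k. h t ^ i / fact i * d i))"
    and "i \<le> k"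
  shows "c i = d i"
proof -
  obtain r where r: "r > 0" "ball x r \<subseteq> A"
    using assms(2,3) open_contains_ball by blast
  define u where "u t = root k (min 1 \<bar>t\<bar>)" for t
  define h where "h t = r / 2 * u t" for t
  have Dk: "in_Dk k h"
    unfolding h_def u_def using assms(1) by (rule in_Dk_root_min)
  have "\<bar>h t\<bar> < r" for t
  proof -
    have "0 \<le> u t" "u t \<le> 1"
      using assms(1) by (simp_all add: u_def)
    then show ?thesis
      using r(1) by (simp add: h_def u_def abs_mult)
  qed
  then have "(\<lambda>t. x + h t) \<in> Nil A"
    using Dk r(2) by (auto simp: Nil_def in_Dk_iff nilpotent_add_const dist_real_def)
  then have "fermat_eq (\<lambda>t. \<Sum>i\<le>k. h t ^ i / fact i * c i) (\<lambda>t. \<Sum>i\<le>k. h t ^ i / fact i * d i)"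
    using c d Dk fermat_eq_refl fermat_eq_sym fermat_eq_trans by meson
  moreover have "(\<Sum>i\<le>k. h t ^ i / fact i * c i) - (\<Sum>i\<le>k. h t ^ i / fact i * d i)
      = (\<Sum>i\<le>k. (c i - d i) * (r / 2) ^ i / fact i * u t ^ i)" for t
    unfolding sum_subtractf[symmetric]
    by (intro sum.cong refl) (simp add: h_def power_mult_distrib field_simps)
  ultimately have "(\<lambda>t. \<Sum>i\<le>k. (c i - d i) * (r / 2) ^ i / fact i * u t ^ i) \<in> o[at 0](\<lambda>t. t)"
    unfolding fermat_eq_def by simp
  then have "(\<lambda>s. \<Sum>i\<le>k. (c i - d i) * (r / 2) ^ i / fact i * s ^ i) \<in> o[at_right 0](\<lambda>s. s ^ k)"
    unfolding u_def using assms(1) by (intro smallo_at_right_if_smallo_root) auto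
  then have "(c i - d i) * (r / 2) ^ i / fact i = 0"
    using assms(6) by (rule poly_coeff_eq_0_if_smallo)
  then show ?thesis
    using r(1) by simp
qed

theorem mainTheorem13:
  fixes k :: nat and A :: "real set" and x :: real and f :: "real \<Rightarrow> real"
  assumes "k \<ge> 1" and "open A" and "x \<in> A" and "Ck_on k A f"
  shows "(\<forall>h. in_Dk k h \<longrightarrow>
            (\<forall>y\<in>Nil A. fermat_eq y (\<lambda>t. x + h t) \<longrightarrow>
               fermat_eq (\<lambda>t. f (y t))
                 (\<lambda>t. \<Sum>i\<le>k. h t ^ i / fact i * (deriv ^^ i) f x)))
       \<and> (\<forall>c :: nat \<Rightarrow> real.
            (\<forall>h. in_Dk k h \<longrightarrow>
               (\<forall>y\<in>Nil A. fermat_eq y (\<lambda>t. x + h t) \<longrightarrow>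
                  fermat_eq (\<lambda>t. f (y t)) (\<lambda>t. \<Sum>i\<le>k. h t ^ i / fact i * c i)))
            \<longrightarrow> (\<forall>i\<le>k. c i = (deriv ^^ i) f x))"
proof (intro conjI allI impI ballI)
  fix h y
  assume "in_Dk k h" "fermat_eq y (\<lambda>t. x + h t)"
  then show "fermat_eq (\<lambda>t. f (y t)) (\<lambda>t. \<Sum>i\<le>k. h t ^ i / fact i * (deriv ^^ i) f x)"
    by (rule fermat_eq_taylor[OF assms])
next
  fix c :: "nat \<Rightarrow> real" and i
  assume "\<forall>h. in_Dk k h \<longrightarrow> (\<forall>y\<in>Nil A. fermat_eq y (\<lambda>t. x + h t) \<longrightarrow>
            fermat_eq (\<lambda>t. f (y t)) (\<lambda>t. \<Sum>i\<le>k. h t ^ i / fact i * c i))"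
    and "i \<le> k"
  then show "c i = (deriv ^^ i) f x"
    using fermat_eq_taylor[OF assms] by (intro fermat_taylor_coeffs_unique[OF assms(1-3)]) auto
qed

end
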